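(* Let $\{\omega_n:n\in\mathbb{N}_0\}$ and $\{\tilde\omega_n:n\in\mathbb{N}_0\}$ be the wavelet packets (defined in the context) associated with a pair of biorthogonal scaling functions $\omega_0=\varphi$ and $\tilde\omega_0=\tilde\varphi$ and associated biorthogonal wavelets. Then $$\langle\omega_n(\cdot),\tilde\omega_n(\cdot-u(k))\rangle=\delta_{0,k}\quad\text{for all }k\in\mathbb{N}_0,\ n\in\mathbb{N}_0.$$
   Context: $K$ is a local field of positive characteristic $p$ with ring of integers $\mathfrak{D}=\{|x|\le1\}$, prime ideal $\mathfrak{B}=\mathfrak{p}\mathfrak{D}$ ($\mathfrak{p}$ a prime element), $q=|\mathfrak{D}/\mathfrak{B}|=p^c$, Haar measure normalized with $\mathfrak{D}$ of measure $1$. Choose $\zeta_0=1,\zeta_1,\dots,\zeta_{c-1}\in\mathfrak{D}$ with $|\zeta_j|=1$ whose images form a basis of $\mathfrak{D}/\mathfrak{B}\cong GF(q)$ over $GF(p)$; for $0\le n<q$, $n=a_0+a_1p+\dots+a_{c-1}p^{c-1}$ ($0\le a_k<p$), put $u(n)=(a_0+a_1\zeta_1+\dots+a_{c-1}\zeta_{c-1})\mathfrak{p}^{-1}$, and for $n=b_0+b_1q+\dots+b_sq^s$ ($0\le b_k<q$), $u(n)=u(b_0)+u(b_1)\mathfrak{p}^{-1}+\dots+u(b_s)\mathfrak{p}^{-s}$. $\chi$ is a character of $(K,+)$ trivial on $\mathfrak{D}$, non-trivial on $\mathfrak{B}^{-1}$, $\chi_k(x)=\chi(u(k)x)$; $\hat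 f(\xi)=\int_Kf(x)\overline{\chi(\xi x)}dx$. Let $\varphi,\tilde\varphi\in L^2(K)$ and $\psi_\ell,\tilde\psi_\ell\in L^2(K)$ ($1\le\ell\le q-1$) satisfy $\varphi(x)=\sqrt q\sum_{k\in\mathbb{N}_0}a_k^0\varphi(\mathfrak{p}^{-1}x-u(k))$, $\psi_\ell(x)=\sqrt q\sum_ka_k^\ell\varphi(\mathfrak{p}^{-1}x-u(k))$, and the same with tildes (coefficients $\tilde a_k^s$), all coefficient sequences in $\ell^2(\mathbb{N}_0)$; masks $m_s(\xi)=\frac1{\sqrt q}\sum_ka_k^s\overline{\chi_k(\xi)}$, $\tilde m_s$ analogously ($0\le s\le q-1$). $\varphi$ is the scaling function of a multiresolution analysis of $L^2(K)$ and $\{\psi_\ell(\cdot-u(k))\}$ is a Riesz basis of a direct complement $W_0$ of $V_0$ in $V_1$. Biorthogonality: for all $k\in\mathbb{N}_0$, $1\le\ell,\ell'\le q-1$: $\langle\varphi,\tilde\varphi(\cdot-u(k))\rangle=\delta_{0,k}$, $\langle\varphi,\tilde\psi_\ell(\cdot-u(k))\rangle=0$, $\langle\tilde\varphi,\psi_\ell(\cdot-u(k))\rangle=0$, $\langle\psi_\ell,\tilde\psi_{\ell'}(\cdot-u(k))\rangle=\delta_{\ell,\ell'}\delta_{0,k}$. Wavelet packets: $\omega_0=\varphi$, $\tilde\omega_0=\tilde\varphi$, and for $n=qr+s$ with $r\in\mathbb{N}_0$, $0\le s\le q-1$: $\omega_n(x)=\sqrt q\sum_{k\in\mathbb{N}_0}a_k^s\omega_r(\mathfrak{p}^{-1}x-u(k))$,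 $\tilde\omega_n(x)=\sqrt q\sum_k\tilde a_k^s\tilde\omega_r(\mathfrak{p}^{-1}x-u(k))$ (so $\omega_s=\psi_s$, $\tilde\omega_s=\tilde\psi_s$ for $1\le s\le q-1$). *)

theory Defs
  imports "HOL-Analysis.Analysis"
begin

text \<open>The field K is an abstract type 'k carrying a field structure and a topology.
  absv is the normalized absolute value, pr a prime element, q = p^c the cardinality
  of the residue field D/B, zeta the chosen lifts of a GF(p)-basis of D/B.\<close>

definition local_field_char_p ::
  "('k::{field,topological_space} \<Rightarrow> real) \<Rightarrow> nat \<Rightarrow> nat \<Rightarrow> 'k \<Rightarrow> bool" where
  "local_field_char_p absv p c pr \<longleftrightarrow>
     prime p \<and> CHAR('k) = p \<and> 0 < c \<and>
     (\<forall>x. absv x = 0 \<longleftrightarrow> x = 0) \<and>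
     (\<forall>x. 0 \<le> absv x) \<and>
     (\<forall>x y. absv (x * y) = absv x * absv y) \<and>
     (\<forall>x y. absv (x + y) \<le> max (absv x) (absv y)) \<and>
     (\<forall>S. open S \<longleftrightarrow> (\<forall>x\<in>S. \<exists>e>0. \<forall>y. absv (y - x) < e \<longrightarrow> y \<in> S)) \<and>
     compact {x. absv x \<le> 1} \<and>
     absv pr = 1 / real (p ^ c) \<and>
     (\<forall>x. absv x < 1 \<longrightarrow> absv x \<le> absv pr)"

text \<open>Linear combination with GF(p)-coefficients (given as digits 0..p-1).\<close>
definition zeta_comb :: "nat \<Rightarrow> (nat \<Rightarrow> 'k::field) \<Rightarrow> (nat \<Rightarrow> nat) \<Rightarrow> 'k" where
  "zeta_comb c zeta a = (\<Sum>j<c. of_nat (a j) * zeta j)"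

text \<open>zeta_0 = 1, |zeta_j| = 1, and the images of zeta_0..zeta_{c-1} form a basis of
  D/B over GF(p): every residue class of D modulo B has exactly one representative
  of the form sum a_j zeta_j with 0 \<le> a_j < p.\<close>
definition residue_basis ::
  "('k::field \<Rightarrow> real) \<Rightarrow> nat \<Rightarrow> nat \<Rightarrow> (nat \<Rightarrow> 'k) \<Rightarrow> bool" where
  "residue_basis absv p c zeta \<longleftrightarrow>
     zeta 0 = 1 \<and> (\<forall>j<c. absv (zeta j) = 1) \<and>
     (\<forall>a b. (\<forall>j<c. a j < p) \<longrightarrow> (\<forall>j<c. b j < p) \<longrightarrow>
        absv (zeta_comb c zeta a - zeta_comb c zeta b) < 1 \<longrightarrow> (\<forall>j<c. a j = b j)) \<and>
     (\<forall>x. absv x \<le> 1 \<longrightarrow> (\<exists>a. (\<forall>j<c. a j < p) \<and> absv (x - zeta_comb c zeta a) < 1))"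

text \<open>The points u(n): for n = b_0 + b_1 q + ... (base q digits) and
  b = a_0 + a_1 p + ... + a_{c-1} p^{c-1} (base p digits),
  u(n) = sum_k (sum_j a_j(b_k) zeta_j) pr^{-(k+1)}.  The k-th base-q digit of n is
  (n div q^k) mod q; digits with q^k > n vanish, so summing over k \<le> n suffices.\<close>
definition u_pt :: "nat \<Rightarrow> nat \<Rightarrow> (nat \<Rightarrow> 'k::field) \<Rightarrow> 'k \<Rightarrow> nat \<Rightarrow> 'k" where
  "u_pt p c zeta pr n =
     (\<Sum>k\<le>n. (\<Sum>j<c. of_nat (((n div (p ^ c) ^ k) mod (p ^ c)) div p ^ j mod p) * zeta j)
              * inverse pr ^ (k + 1))"

definition haar_measure ::
  "('k::{field,topological_space} \<Rightarrow> real) \<Rightarrow> 'k measure \<Rightarrow> bool" where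
  "haar_measure absv M \<longleftrightarrow>
     sets M = sets borel \<and>
     (\<forall>a A. A \<in> sets M \<longrightarrow> emeasure M ((\<lambda>x. a + x) ` A) = emeasure M A) \<and>
     emeasure M {x. absv x \<le> 1} = 1"

definition good_character ::
  "('k::{field,topological_space} \<Rightarrow> real) \<Rightarrow> nat \<Rightarrow> ('k \<Rightarrow> complex) \<Rightarrow> bool" where
  "good_character absv q chi \<longleftrightarrow>
     continuous_on UNIV chi \<and> (\<forall>x. cmod (chi x) = 1) \<and>
     (\<forall>x y. chi (x + y) = chi x * chi y) \<and>
     (\<forall>x. absv x \<le> 1 \<longrightarrow> chi x = 1) \<and>
     (\<exists>x. absv x \<le> real q \<and> chi x \<noteq> 1)"

definition L2 :: "'k measure \<Rightarrow> ('k \<Rightarrow> complex) \<Rightarrow> bool" where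
  "L2 M f \<longleftrightarrow> f \<in> borel_measurable M \<and> integrable M (\<lambda>x. (cmod (f x))\<^sup>2)"

definition ip :: "'k measure \<Rightarrow> ('k \<Rightarrow> complex) \<Rightarrow> ('k \<Rightarrow> complex) \<Rightarrow> complex" where
  "ip M f g = (LINT x|M. f x * cnj (g x))"

definition nsq :: "'k measure \<Rightarrow> ('k \<Rightarrow> complex) \<Rightarrow> real" where
  "nsq M f = (LINT x|M. (cmod (f x))\<^sup>2)"

definition L2_lim :: "'k measure \<Rightarrow> (nat \<Rightarrow> 'k \<Rightarrow> complex) \<Rightarrow> ('k \<Rightarrow> complex) \<Rightarrow> bool" where
  "L2_lim M S f \<longleftrightarrow> (\<lambda>N. nsq M (\<lambda>x. f x - S N x)) \<longlonglongrightarrow> 0"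

definition closed_subspace :: "'k measure \<Rightarrow> ('k \<Rightarrow> complex) set \<Rightarrow> bool" where
  "closed_subspace M V \<longleftrightarrow>
     (\<forall>f\<in>V. L2 M f) \<and> (\<lambda>x. 0) \<in> V \<and>
     (\<forall>f\<in>V. \<forall>g\<in>V. (\<lambda>x. f x + g x) \<in> V) \<and>
     (\<forall>f\<in>V. \<forall>c. (\<lambda>x. c * f x) \<in> V) \<and>
     (\<forall>f. L2 M f \<longrightarrow> (\<forall>e>0. \<exists>g\<in>V. nsq M (\<lambda>x. f x - g x) < e) \<longrightarrow> f \<in> V)"

definition riesz_basis ::
  "'k measure \<Rightarrow> ('i \<Rightarrow> 'k \<Rightarrow> complex) \<Rightarrow> 'i set \<Rightarrow> ('k \<Rightarrow> complex) set \<Rightarrow> bool" where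
  "riesz_basis M g I V \<longleftrightarrow>
     (\<forall>i\<in>I. g i \<in> V) \<and>
     (\<forall>f\<in>V. \<forall>e>0. \<exists>F c. finite F \<and> F \<subseteq> I \<and>
         nsq M (\<lambda>x. f x - (\<Sum>i\<in>F. c i * g i x)) < e) \<and>
     (\<exists>A B. 0 < A \<and> A \<le> B \<and>
        (\<forall>F c. finite F \<longrightarrow> F \<subseteq> I \<longrightarrow>
           A * (\<Sum>i\<in>F. (cmod (c i))\<^sup>2) \<le> nsq M (\<lambda>x. \<Sum>i\<in>F. c i * g i x) \<and>
           nsq M (\<lambda>x. \<Sum>i\<in>F. c i * g i x) \<le> B * (\<Sum>i\<in>F. (cmod (c i))\<^sup>2)))"

definition mra ::
  "'k measure \<Rightarrow> 'k::field \<Rightarrow> (nat \<Rightarrow> 'k) \<Rightarrow> ('k \<Rightarrow> complex) \<Rightarrow> (int \<Rightarrow> ('k \<Rightarrow> complex) set) \<Rightarrow> bool"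
  where
  "mra M pr u phi V \<longleftrightarrow>
     (\<forall>j. closed_subspace M (V j)) \<and>
     (\<forall>j. V j \<subseteq> V (j + 1)) \<and>
     (\<forall>f. L2 M f \<longrightarrow> (\<forall>e>0. \<exists>j. \<exists>g\<in>V j. nsq M (\<lambda>x. f x - g x) < e)) \<and>
     (\<forall>f. (\<forall>j. f \<in> V j) \<longrightarrow> (AE x in M. f x = 0)) \<and>
     (\<forall>j f. f \<in> V j \<longleftrightarrow> (\<lambda>x. f (inverse pr * x)) \<in> V (j + 1)) \<and>
     riesz_basis M (\<lambda>k x. phi (x - u k)) UNIV (V 0)"

definition direct_complement ::
  "'k measure \<Rightarrow> ('k \<Rightarrow> complex) set \<Rightarrow> ('k \<Rightarrow> complex) set \<Rightarrow> ('k \<Rightarrow> complex) set \<Rightarrow> bool" where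
  "direct_complement M W V0 V1 \<longleftrightarrow>
     closed_subspace M W \<and> W \<subseteq> V1 \<and>
     (\<forall>f\<in>V1. \<exists>g\<in>V0. \<exists>h\<in>W. f = (\<lambda>x. g x + h x)) \<and>
     (\<forall>f. f \<in> V0 \<and> f \<in> W \<longrightarrow> (AE x in M. f x = 0))"

definition two_scale ::
  "'k measure \<Rightarrow> nat \<Rightarrow> 'k::field \<Rightarrow> (nat \<Rightarrow> 'k) \<Rightarrow> (nat \<Rightarrow> complex) \<Rightarrow>
     ('k \<Rightarrow> complex) \<Rightarrow> ('k \<Rightarrow> complex) \<Rightarrow> bool" where
  "two_scale M q pr u a g f \<longleftrightarrow>
     L2_lim M (\<lambda>N x. complex_of_real (sqrt (real q)) *
                      (\<Sum>k<N. a k * g (inverse pr * x - u k))) f"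

end

theory Submission
  imports Defs
begin

text \<open>Write $n = qr + s$ with $0 \le s < q$. Inserting the refinement equations of $\omega_n$ and
  $\tilde\omega_n$ into $\langle\omega_n,\tilde\omega_n(\cdot-u(k))\rangle$ and substituting
  $x \mapsto \mathfrak{p}^{-1}x$ (which scales Haar measure by $q^{-1}$ and so cancels the factor
  $\sqrt q\cdot\sqrt q$) gives the double series
  $\sum_{j,l} a^s_j\,\overline{b^s_l}\,\langle\omega_r,\tilde\omega_r(\cdot-u(m))\rangle$ with
  $u(m) = \mathfrak{p}^{-1}u(k) + u(l) - u(j)$; such an $m$ exists because $u(\mathbb{N}_0)$ is an
  additive group (we are in characteristic $p$) that is stable under multiplication by
  $\mathfrak{p}^{-1}$. By induction on $n$ the coefficients $\langle\omega_r,\tilde\omega_r(\cdot-u(m))\rangle$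
  are those of the pair $\varphi,\tilde\varphi$, so the same series also converges to
  $\langle\omega_s,\tilde\omega_s(\cdot-u(k))\rangle$, which is $\delta_{0,k}$ by the biorthogonality
  of $\varphi$ or $\psi_s$ with its dual.\<close>

section \<open>Base-$p$ digits\<close>

lemma nat_eq_sum_digits:
  fixes p c n :: nat
  assumes "n < p ^ c"
  shows "n = (\<Sum>j<c. (n div p ^ j mod p) * p ^ j)"
  using assms
proof (induction c arbitrary: n)
  case 0 then show ?case by simp
next
  case (Suc c)
  have "n div p < p ^ c" using Suc.prems
    by (metis div_less_iff_less_mult mult.commute nat_neq_iff not_less0 pos2 power_Suc zero_less_power
        less_nat_zero_code mult_0_right power_0 power_Suc0_right gr_zeroI)
  from Suc.IH[OF this] have IH: "n div p = (\<Sum>j<c. (n div p div p ^ j mod p) * p ^ j)" .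
  have "(\<Sum>j<Suc c. (n div p ^ j mod p) * p ^ j) = n mod p + (\<Sum>j<c. (n div p ^ Suc j mod p) * p ^ Suc j)"
    by (subst sum.lessThan_Suc_shift) simp
  also have "(\<Sum>j<c. (n div p ^ Suc j mod p) * p ^ Suc j) = p * (\<Sum>i<c. (n div p div p ^ i mod p) * p ^ i)"
    by (subst sum_distrib_left, rule sum.cong) (simp_all add: div_mult2_eq mult_ac)
  also have "\<dots> = p * (n div p)" using IH by simp
  finally show ?case by simp
qed

lemma sum_digits_less_power:
  fixes p c :: nat and d :: "nat \<Rightarrow> nat"
  assumes "\<forall>j<c. d j < p"
  shows "(\<Sum>i<c. d i * p ^ i) < p ^ c"
  using assms
proof (induction c arbitrary: d)
  case 0 then show ?case by simp
next
  case (Suc c)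
  have d0: "d 0 < p" using Suc.prems by simp
  have "(\<Sum>i<c. d (Suc i) * p ^ i) < p ^ c" using Suc.prems by (intro Suc.IH) auto
  hence S: "(\<Sum>i<c. d (Suc i) * p ^ i) + 1 \<le> p ^ c" by simp
  have "(\<Sum>i<Suc c. d i * p ^ i) = d 0 + p * (\<Sum>i<c. d (Suc i) * p ^ i)"
    by (subst sum.lessThan_Suc_shift) (simp add: sum_distrib_left mult.commute mult.left_commute)
  also have "\<dots> < p + p * (\<Sum>i<c. d (Suc i) * p ^ i)" using d0 by simp
  also have "\<dots> = p * ((\<Sum>i<c. d (Suc i) * p ^ i) + 1)" by (simp add: algebra_simps)
  also have "\<dots> \<le> p * p ^ c" using S by (intro mult_le_mono2) 
  finally show ?case by simp
qed

lemma sum_digits_digit: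
  fixes p c :: nat and d :: "nat \<Rightarrow> nat"
  assumes "\<forall>j<c. d j < p" "j < c"
  shows "(\<Sum>i<c. d i * p ^ i) div p ^ j mod p = d j"
  using assms
proof (induction c arbitrary: d j)
  case 0 then show ?case by simp
next
  case (Suc c)
  have d0: "d 0 < p" using Suc.prems by simp
  have eq: "(\<Sum>i<Suc c. d i * p ^ i) = d 0 + p * (\<Sum>i<c. d (Suc i) * p ^ i)"
    by (subst sum.lessThan_Suc_shift) (simp add: sum_distrib_left mult.commute mult.left_commute)
  show ?case
  proof (cases j)
    case 0 then show ?thesis using d0 eq by simp
  next
    case (Suc j')
    have "(\<Sum>i<Suc c. d i * p ^ i) div p = (\<Sum>i<c. d (Suc i) * p ^ i)"
      using eq d0 by simp
    moreover have "(\<Sum>i<c. d (Suc i) * p ^ i) div p ^ j' mod p = d (Suc j')"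
      using Suc.prems Suc by (intro Suc.IH[of "\<lambda>i. d (Suc i)"]) auto
    ultimately show ?thesis using Suc by (simp add: div_mult2_eq)
  qed
qed

section \<open>Square-integrable functions\<close>

lemma borel_measurable_cnj[measurable]:
  assumes "f \<in> borel_measurable M" shows "(\<lambda>x. cnj (f x)) \<in> borel_measurable M"
proof -
  have "cnj \<in> borel_measurable borel"
    by (rule borel_measurable_continuous_onI) (intro continuous_on_cnj continuous_on_id)
  thus ?thesis using measurable_compose[OF assms] by blast
qed

lemma L2_integrable: "L2 M f \<Longrightarrow> integrable M (\<lambda>x. (cmod (f x))\<^sup>2)" by (simp add: L2_def)

lemma mult_le_sum_squares: "0 \<le> (a::real) \<Longrightarrow> 0 \<le> b \<Longrightarrow> a * b \<le> a\<^sup>2 + b\<^sup>2"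
  using sum_squares_bound[of a b] mult_nonneg_nonneg[of a b] by linarith

lemma integrable_mult_cnj:
  assumes f: "L2 M f" and g: "L2 M g"
  shows "integrable M (\<lambda>x. f x * cnj (g x))"
proof (rule Bochner_Integration.integrable_bound)
  show "integrable M (\<lambda>x. (cmod (f x))\<^sup>2 + (cmod (g x))\<^sup>2)"
    using L2_integrable[OF f] L2_integrable[OF g] by simp
  have [measurable]: "f \<in> borel_measurable M" "g \<in> borel_measurable M" using f g by (auto simp: L2_def)
  show "(\<lambda>x. f x * cnj (g x)) \<in> borel_measurable M" by measurable
  show "AE x in M. norm (f x * cnj (g x)) \<le> norm ((cmod (f x))\<^sup>2 + (cmod (g x))\<^sup>2)"
    by (auto simp: norm_mult intro!: mult_le_sum_squares)
qed

lemma L2_add: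
  assumes f: "L2 M f" and g: "L2 M g"
  shows "L2 M (\<lambda>x. f x + g x)"
  unfolding L2_def
proof
  have [measurable]: "f \<in> borel_measurable M" "g \<in> borel_measurable M" using f g by (auto simp: L2_def)
  show "(\<lambda>x. f x + g x) \<in> borel_measurable M" by measurable
  show "integrable M (\<lambda>x. (cmod (f x + g x))\<^sup>2)"
  proof (rule Bochner_Integration.integrable_bound)
    show "integrable M (\<lambda>x. 2 * (cmod (f x))\<^sup>2 + 2 * (cmod (g x))\<^sup>2)"
      using L2_integrable[OF f] L2_integrable[OF g] by simp
    show "(\<lambda>x. (cmod (f x + g x))\<^sup>2) \<in> borel_measurable M" by measurable
    show "AE x in M. norm ((cmod (f x + g x))\<^sup>2) \<le> norm (2 * (cmod (f x))\<^sup>2 + 2 * (cmod (g x))\<^sup>2)"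
    proof (intro AE_I2)
      fix x
      have t: "cmod (f x + g x) \<le> cmod (f x) + cmod (g x)" by (rule norm_triangle_ineq)
      have "(cmod (f x + g x))\<^sup>2 \<le> (cmod (f x) + cmod (g x))\<^sup>2"
        using t by (intro power_mono) auto
      also have "\<dots> \<le> 2 * (cmod (f x))\<^sup>2 + 2 * (cmod (g x))\<^sup>2"
        using sum_squares_bound[of "cmod (f x)" "cmod (g x)"] by (simp add: power2_sum)
      finally show "norm ((cmod (f x + g x))\<^sup>2) \<le> norm (2 * (cmod (f x))\<^sup>2 + 2 * (cmod (g x))\<^sup>2)"
        by simp
    qed
  qed
qed

lemma L2_cmult:
  assumes f: "L2 M f" shows "L2 M (\<lambda>x. a * f x)"
  unfolding L2_def
proof
  have [measurable]: "f \<in> borel_measurable M" using f by (auto simp: L2_def)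
  show "(\<lambda>x. a * f x) \<in> borel_measurable M" by measurable
  have "integrable M (\<lambda>x. (cmod a)\<^sup>2 * (cmod (f x))\<^sup>2)" using L2_integrable[OF f] by simp
  thus "integrable M (\<lambda>x. (cmod (a * f x))\<^sup>2)" by (simp add: norm_mult power_mult_distrib)
qed

lemma L2_diff:
  assumes f: "L2 M f" and g: "L2 M g" shows "L2 M (\<lambda>x. f x - g x)"
  using L2_add[OF f L2_cmult[OF g, of "-1"]] by simp

lemma L2_zero: "L2 M (\<lambda>x. 0)" by (simp add: L2_def)

lemma L2_sum: "(\<And>i. i \<in> I \<Longrightarrow> L2 M (f i)) \<Longrightarrow> L2 M (\<lambda>x. \<Sum>i\<in>I. f i x)"
proof (induction I rule: infinite_finite_induct)
  case (infinite A) then show ?case by (simp add: L2_zero)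
next
  case empty then show ?case by (simp add: L2_zero)
next
  case (insert a A) then show ?case by (simp add: L2_add)
qed

lemma nsq_nonneg: "0 \<le> nsq M f" unfolding nsq_def by (rule integral_nonneg_AE) simp

lemma ip_Cauchy_Schwarz:
  assumes f: "L2 M f" and g: "L2 M g"
  shows "cmod (ip M f g) \<le> sqrt (nsq M f) * sqrt (nsq M g)"
proof -
  have [measurable]: "f \<in> borel_measurable M" "g \<in> borel_measurable M" using f g by (auto simp: L2_def)
  have "ennreal (cmod (ip M f g)) \<le> (\<integral>\<^sup>+x. norm (f x * cnj (g x)) \<partial>M)"
    unfolding ip_def by (rule integral_norm_bound_ennreal[OF integrable_mult_cnj[OF f g]])
  also have "\<dots> = (\<integral>\<^sup>+x. ennreal (cmod (f x)) * ennreal (cmod (g x)) \<partial>M)"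
    by (simp add: norm_mult ennreal_mult'')
  finally have 1: "ennreal (cmod (ip M f g)) ^ 2 \<le> (\<integral>\<^sup>+x. ennreal (cmod (f x)) * ennreal (cmod (g x)) \<partial>M) ^ 2"
    by (intro power_mono) auto
  also have "\<dots> \<le> (\<integral>\<^sup>+x. ennreal (cmod (f x)) ^ 2 \<partial>M) * (\<integral>\<^sup>+x. ennreal (cmod (g x)) ^ 2 \<partial>M)"
    by (rule Cauchy_Schwarz_nn_integral) measurable
  also have "(\<integral>\<^sup>+x. ennreal (cmod (f x)) ^ 2 \<partial>M) = ennreal (nsq M f)"
    unfolding nsq_def using nn_integral_eq_integral[OF L2_integrable[OF f]] by (simp add: ennreal_power)
  also have "(\<integral>\<^sup>+x. ennreal (cmod (g x)) ^ 2 \<partial>M) = ennreal (nsq M g)"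
    unfolding nsq_def using nn_integral_eq_integral[OF L2_integrable[OF g]] by (simp add: ennreal_power)
  finally have "ennreal ((cmod (ip M f g))\<^sup>2) \<le> ennreal (nsq M f * nsq M g)"
    using nsq_nonneg[of M f] nsq_nonneg[of M g] by (simp add: ennreal_power ennreal_mult'')
  hence "(cmod (ip M f g))\<^sup>2 \<le> nsq M f * nsq M g"
    using nsq_nonneg[of M f] nsq_nonneg[of M g] by (simp add: ennreal_le_iff)
  hence "cmod (ip M f g) \<le> sqrt (nsq M f * nsq M g)" by (rule real_le_rsqrt)
  thus ?thesis by (simp add: real_sqrt_mult)
qed

lemma ip_diff_eq:
  assumes F: "L2 M F" and G: "L2 M G" and F': "L2 M F'" and G': "L2 M G'"
  shows "ip M F G - ip M F' G' = ip M (\<lambda>x. F x - F' x) G + ip M F (\<lambda>x. G x - G' x)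
           - ip M (\<lambda>x. F x - F' x) (\<lambda>x. G x - G' x)"
proof -
  have dF: "L2 M (\<lambda>x. F x - F' x)" and dG: "L2 M (\<lambda>x. G x - G' x)"
    using L2_diff[OF F F'] L2_diff[OF G G'] .
  have "ip M F G - ip M F' G' = (LINT x|M. F x * cnj (G x) - F' x * cnj (G' x))"
    unfolding ip_def using integrable_mult_cnj[OF F G] integrable_mult_cnj[OF F' G'] by simp
  also have "\<dots> = (LINT x|M. (F x - F' x) * cnj (G x) + F x * cnj (G x - G' x)
                   - (F x - F' x) * cnj (G x - G' x))"
    by (simp add: algebra_simps)
  also have "\<dots> = ip M (\<lambda>x. F x - F' x) G + ip M F (\<lambda>x. G x - G' x)
                   - ip M (\<lambda>x. F x - F' x) (\<lambda>x. G x - G' x)"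
    unfolding ip_def
    using integrable_mult_cnj[OF dF G] integrable_mult_cnj[OF F dG] integrable_mult_cnj[OF dF dG]
    by simp
  finally show ?thesis .
qed

lemma ip_tendsto:
  assumes F: "L2 M F" and G: "L2 M G" and Fs: "\<And>N. L2 M (Fs N)" and Gs: "\<And>N. L2 M (Gs N)"
    and F_lim: "(\<lambda>N. nsq M (\<lambda>x. F x - Fs N x)) \<longlonglongrightarrow> 0"
    and G_lim: "(\<lambda>N. nsq M (\<lambda>x. G x - Gs N x)) \<longlonglongrightarrow> 0"
  shows "(\<lambda>N. ip M (Fs N) (Gs N)) \<longlonglongrightarrow> ip M F G"
proof -
  define eF where "eF N = sqrt (nsq M (\<lambda>x. F x - Fs N x))" for N
  define eG where "eG N = sqrt (nsq M (\<lambda>x. G x - Gs N x))" for N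
  have bound: "norm (ip M (Fs N) (Gs N) - ip M F G)
      \<le> eF N * sqrt (nsq M G) + sqrt (nsq M F) * eG N + eF N * eG N" for N
  proof -
    have dF: "L2 M (\<lambda>x. F x - Fs N x)" and dG: "L2 M (\<lambda>x. G x - Gs N x)"
      using L2_diff[OF F Fs] L2_diff[OF G Gs] .
    have "norm (ip M (Fs N) (Gs N) - ip M F G) = norm (ip M F G - ip M (Fs N) (Gs N))"
      by (rule norm_minus_commute)
    also have "\<dots> \<le> norm (ip M (\<lambda>x. F x - Fs N x) G) + norm (ip M F (\<lambda>x. G x - Gs N x))
        + norm (ip M (\<lambda>x. F x - Fs N x) (\<lambda>x. G x - Gs N x))"
      unfolding ip_diff_eq[OF F G Fs Gs] by (rule order_trans[OF norm_triangle_ineq4 add_right_mono])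
        (rule norm_triangle_ineq)
    also have "\<dots> \<le> eF N * sqrt (nsq M G) + sqrt (nsq M F) * eG N + eF N * eG N"
      unfolding eF_def eG_def
      using ip_Cauchy_Schwarz[OF dF G] ip_Cauchy_Schwarz[OF F dG] ip_Cauchy_Schwarz[OF dF dG]
      by (intro add_mono) auto
    finally show ?thesis .
  qed
  have "eF \<longlonglongrightarrow> 0" "eG \<longlonglongrightarrow> 0"
    unfolding eF_def eG_def using tendsto_real_sqrt[OF F_lim] tendsto_real_sqrt[OF G_lim] by simp_all
  then have "(\<lambda>N. eF N * sqrt (nsq M G) + sqrt (nsq M F) * eG N + eF N * eG N) \<longlonglongrightarrow> 0"
    by (auto intro!: tendsto_eq_intros)
  then have "(\<lambda>N. ip M (Fs N) (Gs N) - ip M F G) \<longlonglongrightarrow> 0"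
    by (rule Lim_null_comparison[rotated]) (use bound in auto)
  then show ?thesis by (simp add: LIM_zero_iff)
qed

section \<open>The local field and the translation lattice $u(\mathbb{N}_0)$\<close>

locale local_field =
  fixes absv :: "'k::{field,topological_space} \<Rightarrow> real" and p c :: nat and pr :: 'k
    and zeta :: "nat \<Rightarrow> 'k"
  assumes local_field: "local_field_char_p absv p c pr"
    and residue_basis: "residue_basis absv p c zeta"
begin

abbreviation "q \<equiv> p ^ c"
abbreviation "u \<equiv> u_pt p c zeta pr"
abbreviation "ipr \<equiv> inverse pr"

lemma prime_p: "prime p" and CHAR_eq_p: "CHAR('k) = p" and c_pos: "0 < c"
  using local_field unfolding local_field_char_p_def by auto

lemma p_ge_2: "p \<ge> 2" using prime_p prime_ge_2_nat by blast
lemma p_pos[simp]: "0 < p" "p \<noteq> 0" using p_ge_2 by auto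
lemma q_ge_2: "q \<ge> 2"
proof -
  have "p ^ 1 \<le> p ^ c" using c_pos p_ge_2 by (intro power_increasing) auto
  thus ?thesis using p_ge_2 by simp
qed

lemma absv_0[simp]: "absv 0 = 0" and absv_nonneg[simp]: "0 \<le> absv x"
  and absv_mult: "absv (x * y) = absv x * absv y"
  and absv_add_le_max: "absv (x + y) \<le> max (absv x) (absv y)"
  and absv_eq_0_iff: "absv x = 0 \<longleftrightarrow> x = 0"
  and open_absv: "open S \<longleftrightarrow> (\<forall>x\<in>S. \<exists>e>0. \<forall>y. absv (y - x) < e \<longrightarrow> y \<in> S)"
  and absv_pr: "absv pr = 1 / real q"
  and absv_less_1_le_absv_pr: "absv x < 1 \<Longrightarrow> absv x \<le> absv pr"
  using local_field unfolding local_field_char_p_def by auto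

lemma absv_pos: "x \<noteq> 0 \<Longrightarrow> 0 < absv x" by (metis absv_eq_0_iff absv_nonneg less_eq_real_def)

lemma absv_1[simp]: "absv 1 = 1"
proof -
  have "absv 1 = absv 1 * absv 1" using absv_mult[of 1 1] by simp
  moreover have "absv 1 \<noteq> 0" using absv_eq_0_iff[of 1] by simp
  ultimately show ?thesis by simp
qed

lemma absv_minus_1: "absv (-1) = 1"
proof -
  have "absv (-1) * absv (-1) = 1" using absv_mult[of "-1" "-1"] by simp
  hence "absv (-1) ^ 2 = 1" by (simp add: power2_eq_square)
  hence "absv (-1) = 1 \<or> absv (-1) = -1" using power2_eq_1_iff by blast
  thus ?thesis using absv_nonneg[of "-1"] by linarith
qed

lemma absv_minus[simp]: "absv (- x) = absv x"
  using absv_mult[of "-1" x] absv_minus_1 by simp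

lemma absv_minus_commute: "absv (x - y) = absv (y - x)"
  using absv_minus[of "x - y"] by simp

lemma absv_inverse: "absv (inverse x) = inverse (absv x)"
proof (cases "x = 0")
  case False
  have "absv x * absv (inverse x) = 1" using absv_mult[of x "inverse x"] False by simp
  thus ?thesis by (metis inverse_unique)
qed simp

lemma absv_divide: "absv (x / y) = absv x / absv y"
  by (simp add: divide_inverse absv_mult absv_inverse)

lemma absv_power: "absv (x ^ n) = absv x ^ n"
  by (induction n) (simp_all add: absv_mult)

lemma absv_diff_le_max: "absv (x - y) \<le> max (absv x) (absv y)"
  using absv_add_le_max[of x "-y"] by simp

lemma absv_diff_triangle: "absv (x - z) \<le> max (absv (x - y)) (absv (y - z))"
  using absv_add_le_max[of "x - y" "y - z"] by simp

lemma pr_nonzero: "pr \<noteq> 0"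
proof
  assume "pr = 0" hence "absv pr = 0" by simp
  thus False using absv_pr q_ge_2 p_ge_2 by simp
qed

lemma absv_pr_pos: "0 < absv pr" using absv_pos pr_nonzero by simp
lemma real_q_ge_2: "2 \<le> real q" using q_ge_2 by (metis of_nat_le_iff of_nat_numeral)
lemma absv_pr_less_1: "absv pr < 1"
proof -
  have "1 / real q < 1" using real_q_ge_2 p_ge_2 by (subst divide_less_eq_1_pos) auto
  thus ?thesis using absv_pr by simp
qed
lemma absv_ipr: "absv ipr = real q" using absv_inverse absv_pr by simp

lemma absv_of_nat_le_1: "absv (of_nat n) \<le> 1"
proof (induction n)
  case (Suc n) then show ?case using absv_add_le_max[of 1 "of_nat n"] by simp
qed simp

lemma absv_sum_le: "finite A \<Longrightarrow> 0 \<le> r \<Longrightarrow> (\<forall>i\<in>A. absv (f i) \<le> r) \<Longrightarrow> absv (sum f A) \<le> r"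
proof (induction A rule: finite_induct)
  case (insert x F)
  have mx: "max (absv (f x)) (absv (sum f F)) \<le> r" using insert by simp
  have "absv (f x + sum f F) \<le> r" using order_trans[OF absv_add_le_max mx] .
  thus ?case using insert(1,2) by simp
qed simp

lemma absv_zeta: "\<forall>j<c. absv (zeta j) = 1"
  and zeta_comb_unique: "\<And>a b. (\<forall>j<c. a j < p) \<Longrightarrow> (\<forall>j<c. b j < p) \<Longrightarrow>
        absv (zeta_comb c zeta a - zeta_comb c zeta b) < 1 \<Longrightarrow> (\<forall>j<c. a j = b j)"
  and zeta_comb_approx: "\<And>x. absv x \<le> 1 \<Longrightarrow> (\<exists>a. (\<forall>j<c. a j < p) \<and> absv (x - zeta_comb c zeta a) < 1)"
  using residue_basis unfolding residue_basis_def by blast+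

lemma absv_zeta_comb_le_1: "absv (zeta_comb c zeta d) \<le> 1"
  unfolding zeta_comb_def
proof (rule absv_sum_le)
  show "\<forall>i\<in>{..<c}. absv (of_nat (d i) * zeta i) \<le> 1"
  proof
    fix i assume "i \<in> {..<c}"
    hence "absv (zeta i) = 1" using absv_zeta by simp
    thus "absv (of_nat (d i) * zeta i) \<le> 1" using absv_of_nat_le_1[of "d i"] by (simp add: absv_mult)
  qed
qed auto

lemma continuous_on_affine:
  fixes \<alpha> \<beta> :: 'k assumes "\<alpha> \<noteq> 0" shows "continuous_on UNIV (\<lambda>x. \<alpha> * x + \<beta>)"
  unfolding continuous_on_open_vimage[OF open_UNIV]
proof (intro allI impI)
  fix S :: "'k set" assume S: "open S"
  have S': "\<forall>x\<in>S. \<exists>e>0. \<forall>y. absv (y - x) < e \<longrightarrow> y \<in> S" using S by (simp only: open_absv)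
  have ap: "0 < absv \<alpha>" using absv_pos assms by simp
  have "\<forall>x\<in>(\<lambda>x. \<alpha> * x + \<beta>) -` S \<inter> UNIV. \<exists>e>0. \<forall>y. absv (y - x) < e \<longrightarrow> y \<in> (\<lambda>x. \<alpha> * x + \<beta>) -` S \<inter> UNIV"
  proof
    fix x assume "x \<in> (\<lambda>x. \<alpha> * x + \<beta>) -` S \<inter> UNIV"
    hence "\<alpha> * x + \<beta> \<in> S" by simp
    then obtain e where e: "e > 0" "\<And>y. absv (y - (\<alpha> * x + \<beta>)) < e \<Longrightarrow> y \<in> S"
      using S' by blast
    show "\<exists>e>0. \<forall>y. absv (y - x) < e \<longrightarrow> y \<in> (\<lambda>x. \<alpha> * x + \<beta>) -` S \<inter> UNIV"
    proof (intro exI[of _ "e / absv \<alpha>"] conjI allI impI)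
      show "0 < e / absv \<alpha>" using e ap by simp
      fix y assume "absv (y - x) < e / absv \<alpha>"
      hence lt: "absv \<alpha> * absv (y - x) < e" using ap by (simp add: pos_less_divide_eq mult.commute)
      have eq: "(\<alpha> * y + \<beta>) - (\<alpha> * x + \<beta>) = \<alpha> * (y - x)" by (simp add: right_diff_distrib)
      have "absv ((\<alpha> * y + \<beta>) - (\<alpha> * x + \<beta>)) < e" unfolding eq absv_mult using lt .
      hence "\<alpha> * y + \<beta> \<in> S" by (rule e(2))
      thus "y \<in> (\<lambda>x. \<alpha> * x + \<beta>) -` S \<inter> UNIV" by simp
    qed
  qed
  thus "open ((\<lambda>x. \<alpha> * x + \<beta>) -` S \<inter> UNIV)" by (simp only: open_absv)
qed

definition digit_rep :: "nat \<Rightarrow> 'k" where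
  "digit_rep x = (\<Sum>j<c. of_nat ((x mod q) div p ^ j mod p) * zeta j)"

lemma of_nat_p_eq_0: "(of_nat p :: 'k) = 0"
  using of_nat_CHAR[where 'a='k] CHAR_eq_p by simp

lemma of_nat_mod_p: "(of_nat (m mod p) :: 'k) = of_nat m"
proof -
  have "(of_nat m :: 'k) = of_nat (m mod p + p * (m div p))" by simp
  also have "\<dots> = of_nat (m mod p)" by (simp only: of_nat_add of_nat_mult of_nat_p_eq_0) simp
  finally show ?thesis by simp
qed

lemma digit_rep_0[simp]: "digit_rep 0 = 0" by (simp add: digit_rep_def)

lemma digit_rep_mod: "digit_rep (x mod q) = digit_rep x" by (simp add: digit_rep_def)

lemma less_q_power: "k < q ^ k"
proof -
  have "k < 2 ^ k" by (rule less_exp)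
  also have "\<dots> \<le> q ^ k" using q_ge_2 by (intro power_mono) auto
  finally show ?thesis .
qed

lemma u_eq_sum_digit_rep: assumes "n < K" shows "u n = (\<Sum>k<K. digit_rep (n div q ^ k) * ipr ^ (k + 1))"
proof -
  have "u n = (\<Sum>k<Suc n. digit_rep (n div q ^ k) * ipr ^ (k + 1))"
    unfolding u_pt_def digit_rep_def by (simp add: atMost_atLeast0 lessThan_Suc_atMost mod_mod_cancel)
  also have "\<dots> = (\<Sum>k<K. digit_rep (n div q ^ k) * ipr ^ (k + 1))"
  proof (rule sum.mono_neutral_left)
    show "\<forall>i\<in>{..<K} - {..<Suc n}. digit_rep (n div q ^ i) * ipr ^ (i + 1) = 0"
    proof
      fix i assume "i \<in> {..<K} - {..<Suc n}"
      hence "n < q ^ i" using less_q_power[of i] by auto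
      thus "digit_rep (n div q ^ i) * ipr ^ (i + 1) = 0" by simp
    qed
  qed (use assms in auto)
  finally show ?thesis .
qed

lemma u_0[simp]: "u 0 = 0" by (simp add: u_pt_def digit_rep_def)

lemma u_digit_rep_rec: "u n = ipr * (digit_rep n + u (n div q))"
proof -
  have "u n = (\<Sum>k<Suc (Suc n). digit_rep (n div q ^ k) * ipr ^ (k + 1))" by (rule u_eq_sum_digit_rep) simp
  also have "\<dots> = digit_rep n * ipr + (\<Sum>k<Suc n. digit_rep (n div q ^ Suc k) * ipr ^ (Suc k + 1))"
    by (subst sum.lessThan_Suc_shift) simp
  also have "(\<Sum>k<Suc n. digit_rep (n div q ^ Suc k) * ipr ^ (Suc k + 1))
      = ipr * (\<Sum>k<Suc n. digit_rep (n div q div q ^ k) * ipr ^ (k + 1))"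
    by (subst sum_distrib_left, rule sum.cong) (simp_all add: div_mult2_eq mult_ac)
  also have "(\<Sum>k<Suc n. digit_rep (n div q div q ^ k) * ipr ^ (k + 1)) = u (n div q)"
    by (rule u_eq_sum_digit_rep[symmetric]) (simp add: le_imp_less_Suc)
  finally show ?thesis by (simp add: algebra_simps)
qed

lemma digit_rep_sum_digits: assumes "\<forall>j<c. d j < p"
  shows "digit_rep (\<Sum>i<c. d i * p ^ i) = zeta_comb c zeta d"
  using sum_digits_less_power[OF assms] sum_digits_digit[OF assms]
  by (simp add: digit_rep_def zeta_comb_def)

lemma digit_rep_add: "\<exists>z<q. digit_rep x + digit_rep y = digit_rep z"
proof -
  define dx where "dx j = (x mod q) div p ^ j mod p" for j
  define dy where "dy j = (y mod q) div p ^ j mod p" for j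
  define d where "d j = (dx j + dy j) mod p" for j
  have dlt: "\<forall>j<c. d j < p" using p_ge_2 by (simp add: d_def)
  let ?z = "\<Sum>i<c. d i * p ^ i"
  have "digit_rep ?z = zeta_comb c zeta d" by (rule digit_rep_sum_digits[OF dlt])
  also have "\<dots> = digit_rep x + digit_rep y"
    by (simp add: zeta_comb_def digit_rep_def d_def of_nat_mod_p sum.distrib[symmetric] algebra_simps
        dx_def dy_def)
  finally show ?thesis using sum_digits_less_power[OF dlt] by metis
qed

lemma u_digit_append: "i < q \<Longrightarrow> u (i + q * k) = ipr * (digit_rep i + u k)"
  using u_digit_rep_rec[of "i + q * k"] digit_rep_mod[of "i + q * k"] digit_rep_mod[of i] by simp

lemma u_add_closed: "\<exists>e. u a + u b = u e"
proof (induction "a + b" arbitrary: a b rule: less_induct)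
  case less
  show ?case
  proof (cases "a = 0 \<or> b = 0")
    case True then show ?thesis by auto
  next
    case False
    have "a div q < a" "b div q < b" using False q_ge_2 by auto
    then obtain e where e: "u (a div q) + u (b div q) = u e"
      using less[of "a div q" "b div q"] by auto
    obtain z where z: "z < q" "digit_rep a + digit_rep b = digit_rep z" using digit_rep_add by blast
    have "u a + u b = ipr * ((digit_rep a + digit_rep b) + (u (a div q) + u (b div q)))"
      using u_digit_rep_rec[of a] u_digit_rep_rec[of b] by (simp add: algebra_simps)
    also have "\<dots> = u (z + q * e)" using u_digit_append[OF z(1)] z(2) e by simp
    finally show ?thesis by blast
  qed
qed

lemma u_of_nat_mult_closed: "\<exists>e. of_nat m * u a = u e"
proof (induction m)
  case 0 show ?case by (metis mult_zero_left of_nat_0 u_0)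
next
  case (Suc m)
  then obtain e where "of_nat m * u a = u e" by blast
  moreover obtain e' where "u e + u a = u e'" using u_add_closed by blast
  ultimately show ?case by (metis distrib_right mult_1 of_nat_Suc add.commute)
qed

lemma u_uminus_closed: "\<exists>e. - u a = u e"
proof -
  have "- u a = of_nat (p - 1) * u a"
    using p_ge_2 of_nat_p_eq_0 by (simp add: of_nat_diff)
  then show ?thesis using u_of_nat_mult_closed by metis
qed

lemma u_q_mult: "ipr * u k = u (q * k)"
  using u_digit_append[of 0 k] q_ge_2 by simp

lemma u_affine_closed: "\<exists>m. u m = ipr * u k + u l - u j"
proof -
  obtain e1 where e1: "- u j = u e1" using u_uminus_closed by blast
  obtain e2 where e2: "u (q * k) + u l = u e2" using u_add_closed by blast
  obtain e3 where e3: "u e2 + u e1 = u e3" using u_add_closed by blast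
  show ?thesis using e1 e2 e3 u_q_mult[of k] by (metis diff_conv_add_uminus)
qed

definition shift_index :: "nat \<Rightarrow> nat \<Rightarrow> nat \<Rightarrow> nat" where
  "shift_index j l k = (SOME m. u m = ipr * u k + u l - u j)"

lemma u_shift_index: "u (shift_index j l k) = ipr * u k + u l - u j"
  unfolding shift_index_def using someI_ex[OF u_affine_closed[of k l j]] .

lemma digit_rep_approx:
  assumes "absv y \<le> 1"
  obtains i where "i < q" "absv (y - digit_rep i) \<le> absv pr"
proof -
  obtain a where a: "\<forall>j<c. a j < p" "absv (y - zeta_comb c zeta a) < 1"
    using zeta_comb_approx[OF assms] by blast
  show thesis
    using that[of "\<Sum>i<c. a i * p ^ i"] sum_digits_less_power[OF a(1)] digit_rep_sum_digits[OF a(1)]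
      absv_less_1_le_absv_pr[OF a(2)] by simp
qed

lemma u_covers: "\<exists>k. absv (x - u k) \<le> 1"
proof -
  obtain N where "absv x < real q ^ N" using real_arch_pow[of "real q" "absv x"] real_q_ge_2 by auto
  then show ?thesis
  proof (induction N arbitrary: x)
    case 0 then show ?case by (intro exI[of _ 0]) simp
  next
    case (Suc N)
    have "absv (pr * x) = absv x / real q" using absv_pr by (simp add: absv_mult)
    also have "\<dots> < real q ^ N" using Suc.prems real_q_ge_2 by (simp add: divide_less_eq mult.commute)
    finally have "absv (pr * x) < real q ^ N" .
    then obtain k where "absv (pr * x - u k) \<le> 1" using Suc.IH by (blast intro: less_imp_le)
    then obtain i where i: "i < q" "absv (pr * x - u k - digit_rep i) \<le> absv pr"
      by (rule digit_rep_approx)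
    have "x - u (i + q * k) = ipr * (pr * x - u k - digit_rep i)"
      using u_digit_append[OF i(1)] pr_nonzero by (simp add: field_simps)
    then have "absv (x - u (i + q * k)) \<le> real q * absv pr"
      using i(2) real_q_ge_2 by (simp add: absv_mult absv_ipr)
    also have "\<dots> = 1" using absv_pr real_q_ge_2 by simp
    finally show ?case by blast
  qed
qed

lemma absv_digit_rep_le_1: "absv (digit_rep i) \<le> 1"
  using absv_zeta_comb_le_1[of "\<lambda>j. (i mod q) div p ^ j mod p"]
  by (simp add: digit_rep_def zeta_comb_def)

lemma digit_rep_inj: assumes "i < q" "i' < q" "absv (digit_rep i - digit_rep i') < 1" shows "i = i'"
proof -
  have "\<forall>j<c. i div p ^ j mod p = i' div p ^ j mod p"
    using zeta_comb_unique[of "\<lambda>j. i div p ^ j mod p" "\<lambda>j. i' div p ^ j mod p"] assms p_ge_2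
    by (simp add: digit_rep_def zeta_comb_def)
  hence "(\<Sum>j<c. (i div p ^ j mod p) * p ^ j) = (\<Sum>j<c. (i' div p ^ j mod p) * p ^ j)" by simp
  thus ?thesis using nat_eq_sum_digits[OF assms(1)] nat_eq_sum_digits[OF assms(2)] by simp
qed

definition disc :: "'k \<Rightarrow> nat \<Rightarrow> 'k set" where
  "disc a m = {x. absv (x - a) \<le> absv pr ^ m}"

lemma absv_pr_power_antimono: "m \<le> n \<Longrightarrow> absv pr ^ n \<le> absv pr ^ m"
  using absv_pr_pos absv_pr_less_1 by (intro power_decreasing) auto

lemma absv_pr_power_pos: "0 < absv pr ^ m" using absv_pr_pos by simp

lemma open_disc: "open (disc a m)"
  unfolding open_absv disc_def
proof safe
  fix x assume x: "absv (x - a) \<le> absv pr ^ m"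
  show "\<exists>e>0. \<forall>y. absv (y - x) < e \<longrightarrow> y \<in> {x. absv (x - a) \<le> absv pr ^ m}"
  proof (intro exI[of _ "absv pr ^ m"] conjI allI impI)
    fix y assume "absv (y - x) < absv pr ^ m"
    thus "y \<in> {x. absv (x - a) \<le> absv pr ^ m}"
      using absv_diff_triangle[of y a x] x by simp
  qed (rule absv_pr_power_pos)
qed

lemma disc_recenter: "y \<in> disc a m \<Longrightarrow> disc y m = disc a m"
  unfolding disc_def
proof safe
  fix x assume "absv (y - a) \<le> absv pr ^ m" "absv (x - y) \<le> absv pr ^ m"
  thus "absv (x - a) \<le> absv pr ^ m" using absv_diff_triangle[of x a y] by simp
next
  fix x assume "absv (y - a) \<le> absv pr ^ m" "absv (x - a) \<le> absv pr ^ m"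
  thus "absv (x - y) \<le> absv pr ^ m" using absv_diff_triangle[of x y a] absv_minus_commute[of y a] by simp
qed

lemma disc_antimono: "m \<le> n \<Longrightarrow> disc a n \<subseteq> disc a m"
  unfolding disc_def using absv_pr_power_antimono by (auto intro: order_trans)

lemma disc_translate: "disc a m = (\<lambda>x. a + x) ` disc 0 m"
  unfolding disc_def by (auto simp: image_iff) (metis add.commute diff_add_cancel)

lemma disc_0_split: "disc 0 m = (\<Union>i<q. (\<lambda>x. pr ^ m * digit_rep i + x) ` disc 0 (Suc m))"
proof safe
  fix x assume x: "x \<in> disc 0 m"
  define y where "y = x / pr ^ m"
  have "absv y \<le> 1" using x absv_pr_power_pos[of m] unfolding y_def disc_def
    by (simp add: absv_divide absv_power)
  then obtain i where i: "i < q" "absv (y - digit_rep i) \<le> absv pr" by (rule digit_rep_approx)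
  moreover have "x - pr ^ m * digit_rep i = pr ^ m * (y - digit_rep i)" unfolding y_def using pr_nonzero
    by (simp add: field_simps)
  ultimately have "absv (x - pr ^ m * digit_rep i) \<le> absv pr ^ Suc m"
    using absv_pr_power_pos[of m] by (simp add: absv_mult absv_power)
  hence "x - pr ^ m * digit_rep i \<in> disc 0 (Suc m)" unfolding disc_def by simp
  thus "x \<in> (\<Union>i<q. (\<lambda>x. pr ^ m * digit_rep i + x) ` disc 0 (Suc m))"
    using i(1) by (auto intro!: bexI[of _ i] image_eqI[of _ _ "x - pr ^ m * digit_rep i"])
next
  fix i e assume "i < q" "e \<in> disc 0 (Suc m)"
  hence e: "absv e \<le> absv pr ^ Suc m" by (simp add: disc_def)
  have "absv (pr ^ m * digit_rep i) \<le> absv pr ^ m"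
    using absv_digit_rep_le_1[of i] absv_pr_power_pos[of m] by (simp add: absv_mult absv_power mult_left_le)
  moreover have "absv e \<le> absv pr ^ m" using e absv_pr_power_antimono[of m "Suc m"] by simp
  ultimately show "pr ^ m * digit_rep i + e \<in> disc 0 m"
    unfolding disc_def using absv_add_le_max[of "pr ^ m * digit_rep i" e] by simp
qed

lemma disc_0_split_disjoint: "disjoint_family_on (\<lambda>i. (\<lambda>x. pr ^ m * digit_rep i + x) ` disc 0 (Suc m)) {..<q}"
  unfolding disjoint_family_on_def
proof (intro ballI impI)
  fix i i' assume ii: "i \<in> {..<q}" "i' \<in> {..<q}" "i \<noteq> i'"
  show "(\<lambda>x. pr ^ m * digit_rep i + x) ` disc 0 (Suc m) \<inter> (\<lambda>x. pr ^ m * digit_rep i' + x) ` disc 0 (Suc m) = {}"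
  proof (rule ccontr)
    assume "\<not> ?thesis"
    then obtain e e' where ee: "absv e \<le> absv pr ^ Suc m" "absv e' \<le> absv pr ^ Suc m"
      "pr ^ m * digit_rep i + e = pr ^ m * digit_rep i' + e'" by (auto simp: disc_def)
    have "pr ^ m * (digit_rep i - digit_rep i') = e' - e" using ee(3) by (simp add: algebra_simps)
    hence "absv (pr ^ m * (digit_rep i - digit_rep i')) \<le> absv pr ^ Suc m"
      using absv_diff_le_max[of e' e] ee(1,2) by simp
    hence "absv pr ^ m * absv (digit_rep i - digit_rep i') \<le> absv pr ^ m * absv pr"
      by (simp add: absv_mult absv_power mult.commute)
    hence "absv (digit_rep i - digit_rep i') \<le> absv pr" using absv_pr_power_pos[of m] by simp
    hence "absv (digit_rep i - digit_rep i') < 1" using absv_pr_less_1 by simp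
    thus False using digit_rep_inj ii by auto
  qed
qed

end

section \<open>Haar measure under translation and dilation\<close>

locale local_field_haar = local_field absv p c pr zeta
  for absv :: "'k::{field,topological_space} \<Rightarrow> real" and p c pr zeta +
  fixes M :: "'k measure"
  assumes haar: "haar_measure absv M"
begin

lemma sets_M: "sets M = sets borel"
  and emeasure_translate: "A \<in> sets M \<Longrightarrow> emeasure M ((\<lambda>x. a + x) ` A) = emeasure M A"
  and emeasure_unit_disc: "emeasure M {x. absv x \<le> 1} = 1"
  using haar unfolding haar_measure_def by auto

lemma space_M[simp]: "space M = UNIV"
  using sets_eq_imp_space_eq[OF sets_M] by simp

lemma measurable_affine:
  assumes "\<alpha> \<noteq> 0" shows "(\<lambda>x. \<alpha> * x + \<beta>) \<in> measurable M M"
proof -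
  have "(\<lambda>x. \<alpha> * x + \<beta>) \<in> measurable borel borel"
    by (rule borel_measurable_continuous_onI[OF continuous_on_affine[OF assms]])
  thus ?thesis using measurable_cong_sets[OF sets_M sets_M] by simp
qed

lemma measurable_translate: "(\<lambda>x. x + t) \<in> measurable M M"
  using measurable_affine[of 1 t] by simp

lemma open_in_sets_M: "open S \<Longrightarrow> S \<in> sets M" using sets_M by simp

lemma distr_translate: "distr M M (\<lambda>x. x + t) = M"
proof (rule measure_eqI)
  fix A assume A: "A \<in> sets (distr M M (\<lambda>x. x + t))"
  hence A': "A \<in> sets M" by simp
  have "(\<lambda>x. x + t) -` A \<inter> space M = (\<lambda>x. (-t) + x) ` A"
  proof safe
    fix x assume "x + t \<in> A"
    thus "x \<in> (\<lambda>x. (-t) + x) ` A" by (intro image_eqI[of _ _ "x + t"]) auto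
  qed auto
  thus "emeasure (distr M M (\<lambda>x. x + t)) A = emeasure M A"
    using emeasure_distr[OF measurable_translate A'] emeasure_translate[OF A', of "-t"] by simp
qed simp

lemma integral_translate:
  fixes f :: "'k \<Rightarrow> 'b::{banach, second_countable_topology}"
  assumes "f \<in> borel_measurable M"
  shows "(LINT x|M. f (x + t)) = (LINT x|M. f x)"
  using integral_distr[OF measurable_translate assms, of t] distr_translate by simp

lemma integrable_translate:
  fixes f :: "'k \<Rightarrow> 'b::{banach, second_countable_topology}"
  assumes "f \<in> borel_measurable M"
  shows "integrable M (\<lambda>x. f (x + t)) \<longleftrightarrow> integrable M f"
  using integrable_distr_eq[OF measurable_translate assms, of t] distr_translate by simp

lemma disc_sets[measurable]: "disc a m \<in> sets M" using open_in_sets_M open_disc by simp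

lemma emeasure_disc_0: "emeasure M (disc 0 m) = ennreal (1 / real q ^ m)"
proof (induction m)
  case 0
  have "disc 0 0 = {x. absv x \<le> 1}" by (simp add: disc_def)
  then show ?case using emeasure_unit_disc by simp
next
  case (Suc m)
  have "emeasure M (disc 0 m) = (\<Sum>i<q. emeasure M ((\<lambda>x. pr ^ m * digit_rep i + x) ` disc 0 (Suc m)))"
  proof (subst disc_0_split, rule sum_emeasure[symmetric])
    show "(\<lambda>i. (\<lambda>x. pr ^ m * digit_rep i + x) ` disc 0 (Suc m)) ` {..<q} \<subseteq> sets M"
      using disc_sets by (auto simp: disc_translate[of _ "Suc m", symmetric])
  qed (use disc_0_split_disjoint in auto)
  also have "\<dots> = of_nat q * emeasure M (disc 0 (Suc m))"
    using emeasure_translate[OF disc_sets] by simp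
  finally have eq: "ennreal (1 / real q ^ m) = of_nat q * emeasure M (disc 0 (Suc m))"
    using Suc.IH by simp
  have "of_nat q * ennreal (1 / real q ^ Suc m) = ennreal (1 / real q ^ m)"
    using real_q_ge_2 by (simp add: ennreal_of_nat_eq_real_of_nat ennreal_mult''[symmetric] field_simps)
  hence "of_nat q * emeasure M (disc 0 (Suc m)) = of_nat q * ennreal (1 / real q ^ Suc m)"
    using eq by simp
  hence "ennreal (real q) * emeasure M (disc 0 (Suc m)) = ennreal (real q) * ennreal (1 / real q ^ Suc m)"
    by (simp only: ennreal_of_nat_eq_real_of_nat)
  moreover have "ennreal (real q) \<noteq> 0" "ennreal (real q) \<noteq> top" using real_q_ge_2 by auto
  ultimately show ?case using ennreal_mult_cancel_left by blast
qed

lemma emeasure_disc: "emeasure M (disc a m) = ennreal (1 / real q ^ m)"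
  using emeasure_translate[OF disc_sets, of a 0 m] emeasure_disc_0 disc_translate[of a m] by simp

definition discs :: "'k set set" where
  "discs = insert {} ((\<lambda>(k, m). disc (pr ^ m * u k) m) ` UNIV)"

lemma countable_discs: "countable discs" unfolding discs_def by simp

lemma disc_eq_lattice_disc: "\<exists>k. disc a m = disc (pr ^ m * u k) m"
proof -
  obtain k where k: "absv (a / pr ^ m - u k) \<le> 1" using u_covers by blast
  have "a - pr ^ m * u k = pr ^ m * (a / pr ^ m - u k)" using pr_nonzero by (simp add: field_simps)
  hence "absv (a - pr ^ m * u k) \<le> absv pr ^ m"
    using k absv_pr_power_pos[of m] by (simp add: absv_mult absv_power mult_left_le)
  hence "a \<in> disc (pr ^ m * u k) m" by (simp add: disc_def)
  thus ?thesis using disc_recenter by blast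
qed

lemma disc_in_discs: "disc a m \<in> discs" using disc_eq_lattice_disc[of a m] unfolding discs_def by auto

lemma discsE: "X \<in> discs \<Longrightarrow> X = {} \<or> (\<exists>a m. X = disc a m)"
  unfolding discs_def by auto

lemma topological_basis_discs: "topological_basis discs"
proof (rule topological_basisI)
  fix B assume "B \<in> discs" thus "open B" using discsE open_disc by auto
next
  fix O' :: "'k set" and x :: 'k assume "open O'" "x \<in> O'"
  then obtain e where e: "e > 0" "\<forall>y. absv (y - x) < e \<longrightarrow> y \<in> O'" using open_absv by blast
  obtain m where m: "absv pr ^ m < e" using real_arch_pow_inv[OF e(1) absv_pr_less_1] by blast
  have "disc x m \<subseteq> O'" using e(2) m by (auto simp: disc_def)
  moreover have "x \<in> disc x m" by (simp add: disc_def)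
  ultimately show "\<exists>B'\<in>discs. x \<in> B' \<and> B' \<subseteq> O'" using disc_in_discs by blast
qed

lemma sets_M_eq_sigma_discs: "sets M = sigma_sets UNIV discs"
proof -
  have "sets M = sets (sigma UNIV discs)" using borel_eq_countable_basis[OF countable_discs topological_basis_discs] sets_M by simp
  also have "\<dots> = sigma_sets UNIV discs" by (rule sets_measure_of) simp
  finally show ?thesis .
qed

lemma Int_stable_discs: "Int_stable discs"
  unfolding Int_stable_def
proof (intro ballI)
  fix X Y assume XY: "X \<in> discs" "Y \<in> discs"
  show "X \<inter> Y \<in> discs"
  proof (cases "X \<inter> Y = {}")
    case True then show ?thesis by (simp add: discs_def)
  next
    case False
    then obtain z where z: "z \<in> X" "z \<in> Y" by blast
    obtain a m b n where "X = disc a m" "Y = disc b n" using XY z discsE by blast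
    with z have "X = disc z m" "Y = disc z n" using disc_recenter by simp_all
    then have "X \<inter> Y = disc z (max m n)"
      using disc_antimono[of m n z] disc_antimono[of n m z] by (cases "m \<le> n") (auto simp: max_def)
    then show ?thesis using disc_in_discs by simp
  qed
qed

lemma measurable_dilation: "(\<lambda>x. ipr * x) \<in> measurable M M"
  using measurable_affine[of ipr 0] pr_nonzero by simp

lemma dilation_vimage_disc: "(\<lambda>x. ipr * x) -` disc a m = disc (pr * a) (Suc m)"
proof -
  have "absv (ipr * x - a) = absv (x - pr * a) / absv pr" for x
  proof -
    have "ipr * x - a = (x - pr * a) / pr" using pr_nonzero by (simp add: field_simps)
    thus ?thesis by (simp add: absv_divide)
  qed
  thus ?thesis unfolding disc_def using absv_pr_pos by (auto simp: divide_le_eq mult.commute)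
qed

lemma emeasure_distr_dilation_disc: "emeasure (distr M M (\<lambda>x. ipr * x)) (disc a m) = ennreal (1 / real q ^ Suc m)"
  using emeasure_distr[OF measurable_dilation disc_sets[of a m]] dilation_vimage_disc emeasure_disc by simp

lemma distr_dilation: "distr M M (\<lambda>x. ipr * x) = density M (\<lambda>_. ennreal (1 / real q))"
proof (rule measure_eqI_generator_eq[OF Int_stable_discs, of UNIV])
  show "discs \<subseteq> Pow UNIV" by simp
  show "sets (distr M M (\<lambda>x. ipr * x)) = sigma_sets UNIV discs" using sets_M_eq_sigma_discs by simp
  show "sets (density M (\<lambda>_. ennreal (1 / real q))) = sigma_sets UNIV discs" using sets_M_eq_sigma_discs by simp
  show "range (\<lambda>k. disc (u k) 0) \<subseteq> discs" using disc_in_discs by auto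
  show "(\<Union>k. disc (u k) 0) = UNIV"
  proof -
    have "x \<in> (\<Union>k. disc (u k) 0)" for x using u_covers[of x] by (auto simp: disc_def absv_minus_commute)
    thus ?thesis by auto
  qed
  fix k show "emeasure (distr M M (\<lambda>x. ipr * x)) (disc (u k) 0) \<noteq> \<infinity>"
    using emeasure_distr_dilation_disc by simp
next
  fix X assume "X \<in> discs"
  then consider "X = {}" | a m where "X = disc a m" using discsE by blast
  thus "emeasure (distr M M (\<lambda>x. ipr * x)) X = emeasure (density M (\<lambda>_. ennreal (1 / real q))) X"
  proof cases
    case 2
    have "emeasure (density M (\<lambda>_. ennreal (1 / real q))) X = ennreal (1 / real q) * ennreal (1 / real q ^ m)"
      using emeasure_density_const[OF disc_sets[of a m]] emeasure_disc 2 by simp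
    also have "\<dots> = ennreal (1 / real q ^ Suc m)" using real_q_ge_2 by (simp add: ennreal_mult''[symmetric])
    finally show ?thesis using emeasure_distr_dilation_disc 2 by simp
  qed simp
qed

lemma integral_dilation:
  fixes f :: "'k \<Rightarrow> 'b::{banach, second_countable_topology}"
  assumes f: "f \<in> borel_measurable M"
  shows "(LINT x|M. f (ipr * x)) = (1 / real q) *\<^sub>R (LINT x|M. f x)"
proof -
  have "(LINT x|M. f (ipr * x)) = integral\<^sup>L (density M (\<lambda>_. ennreal (1 / real q))) f"
    using integral_distr[OF measurable_dilation f] distr_dilation by simp
  also have "\<dots> = (LINT x|M. (1 / real q) *\<^sub>R f x)"
    using integral_density[OF f, of "\<lambda>_. 1 / real q"] real_q_ge_2 by simp
  finally show ?thesis by simp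
qed

lemma integrable_dilation:
  fixes f :: "'k \<Rightarrow> 'b::{banach, second_countable_topology}"
  assumes f: "f \<in> borel_measurable M"
  shows "integrable M (\<lambda>x. f (ipr * x)) \<longleftrightarrow> integrable M f"
proof -
  have "integrable M (\<lambda>x. f (ipr * x)) \<longleftrightarrow> integrable (density M (\<lambda>_. ennreal (1 / real q))) f"
    using integrable_distr_eq[OF measurable_dilation f] distr_dilation by simp
  also have "\<dots> \<longleftrightarrow> integrable M (\<lambda>x. (1 / real q) *\<^sub>R f x)"
    using integrable_density[OF f, of "\<lambda>_. 1 / real q"] real_q_ge_2 by simp
  also have "\<dots> \<longleftrightarrow> integrable M f"
  proof
    assume "integrable M (\<lambda>x. (1 / real q) *\<^sub>R f x)"
    hence "integrable M (\<lambda>x. real q *\<^sub>R ((1 / real q) *\<^sub>R f x))" by (rule integrable_scaleR_right)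
    moreover have "real q *\<^sub>R ((1 / real q) *\<^sub>R f x) = f x" for x using real_q_ge_2 by simp
    ultimately show "integrable M f" by simp
  qed (rule integrable_scaleR_right)
  finally show ?thesis .
qed

lemma measurable_translate_fun: "f \<in> borel_measurable M \<Longrightarrow> (\<lambda>x. f (x + t)) \<in> borel_measurable M"
  using measurable_compose[OF measurable_translate] by blast

lemma measurable_dilation_fun: "f \<in> borel_measurable M \<Longrightarrow> (\<lambda>x. f (ipr * x)) \<in> borel_measurable M"
  using measurable_compose[OF measurable_dilation] by blast

lemma L2_translate: assumes "L2 M f" shows "L2 M (\<lambda>x. f (x + t))"
proof -
  have m: "f \<in> borel_measurable M" using assms by (simp add: L2_def)
  have "(\<lambda>x. (cmod (f x))\<^sup>2) \<in> borel_measurable M" using m by measurable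
  hence "integrable M (\<lambda>x. (cmod (f (x + t)))\<^sup>2)"
    using integrable_translate[of "\<lambda>x. (cmod (f x))\<^sup>2" t] L2_integrable[OF assms] by simp
  thus ?thesis using measurable_translate_fun[OF m] by (simp add: L2_def)
qed

lemma L2_dilation: assumes "L2 M f" shows "L2 M (\<lambda>x. f (ipr * x))"
proof -
  have m: "f \<in> borel_measurable M" using assms by (simp add: L2_def)
  have "(\<lambda>x. (cmod (f x))\<^sup>2) \<in> borel_measurable M" using m by measurable
  hence "integrable M (\<lambda>x. (cmod (f (ipr * x)))\<^sup>2)"
    using integrable_dilation[of "\<lambda>x. (cmod (f x))\<^sup>2"] L2_integrable[OF assms] by simp
  thus ?thesis using measurable_dilation_fun[OF m] by (simp add: L2_def)
qed

lemma L2_affine: assumes "L2 M f" shows "L2 M (\<lambda>x. f (ipr * x - t))"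
  using L2_dilation[OF L2_translate[OF assms, of "-t"]] by simp

lemma nsq_translate: assumes "L2 M f" shows "nsq M (\<lambda>x. f (x + t)) = nsq M f"
proof -
  have m: "f \<in> borel_measurable M" using assms by (simp add: L2_def)
  have "(\<lambda>x. (cmod (f x))\<^sup>2) \<in> borel_measurable M" using m by measurable
  thus ?thesis unfolding nsq_def by (rule integral_translate)
qed

section \<open>Refinement equations\<close>

lemma integral_two_scale_term:
  assumes f0: "L2 M f0" and g0: "L2 M g0"
  shows "(LINT x|M. f0 (ipr * x - u j) * cnj (g0 (ipr * x - (ipr * u k + u l))))
       = complex_of_real (1 / real q) * ip M f0 (\<lambda>x. g0 (x - u (shift_index j l k)))"
proof -
  have [measurable]: "f0 \<in> borel_measurable M" "g0 \<in> borel_measurable M" using f0 g0 by (auto simp: L2_def)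
  define t where "t = ipr * u k + u l"
  define h where "h y = f0 (y - u j) * cnj (g0 (y - t))" for y
  have hm: "h \<in> borel_measurable M"
  proof -
    have "(\<lambda>y. f0 (y + - u j)) \<in> borel_measurable M" by (rule measurable_translate_fun) measurable
    moreover have "(\<lambda>y. g0 (y + - t)) \<in> borel_measurable M" by (rule measurable_translate_fun) measurable
    ultimately show ?thesis unfolding h_def by simp
  qed
  have "(LINT x|M. f0 (ipr * x - u j) * cnj (g0 (ipr * x - t))) = (LINT x|M. h (ipr * x))"
    by (simp add: h_def)
  also have "\<dots> = (1 / real q) *\<^sub>R (LINT y|M. h y)" by (rule integral_dilation[OF hm])
  also have "(LINT y|M. h y) = (LINT y|M. h (y + u j))" by (rule integral_translate[OF hm, symmetric])
  also have "\<dots> = ip M f0 (\<lambda>x. g0 (x - u (shift_index j l k)))"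
    unfolding ip_def h_def u_shift_index t_def by (simp add: algebra_simps)
  finally show ?thesis unfolding t_def by (simp add: scaleR_conv_of_real)
qed

lemma ip_two_scale_partial_sum:
  fixes f0 g0 :: "'k \<Rightarrow> complex" and \<alpha> \<beta> :: "nat \<Rightarrow> complex"
  assumes f0: "L2 M f0" and g0: "L2 M g0"
  shows "ip M (\<lambda>x. complex_of_real (sqrt (real q)) * (\<Sum>j<N. \<alpha> j * f0 (ipr * x - u j)))
              (\<lambda>x. complex_of_real (sqrt (real q)) * (\<Sum>l<N. \<beta> l * g0 (ipr * (x - u k) - u l)))
       = (\<Sum>j<N. \<Sum>l<N. \<alpha> j * cnj (\<beta> l) * ip M f0 (\<lambda>x. g0 (x - u (shift_index j l k))))"
proof -
  define sq where "sq = complex_of_real (sqrt (real q))"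
  define T where "T j l x = f0 (ipr * x - u j) * cnj (g0 (ipr * x - (ipr * u k + u l)))" for j l x
  have T_integrable: "integrable M (T j l)" for j l
    unfolding T_def by (rule integrable_mult_cnj[OF L2_affine[OF f0] L2_affine[OF g0]])
  have sq_cnj: "sq * cnj sq = complex_of_real (real q)"
    unfolding sq_def by (simp flip: of_real_mult)
  have expand: "sq * (\<Sum>j<N. \<alpha> j * f0 (ipr * x - u j))
      * cnj (sq * (\<Sum>l<N. \<beta> l * g0 (ipr * (x - u k) - u l)))
      = (\<Sum>j<N. \<Sum>l<N. (complex_of_real (real q) * (\<alpha> j * cnj (\<beta> l))) * T j l x)" for x
  proof -
    have arg: "ipr * (x - u k) - u l = ipr * x - (ipr * u k + u l)" for l
      by (simp add: algebra_simps)
    have "sq * (\<Sum>j<N. \<alpha> j * f0 (ipr * x - u j))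
        * cnj (sq * (\<Sum>l<N. \<beta> l * g0 (ipr * (x - u k) - u l)))
        = (sq * cnj sq) * (\<Sum>j<N. \<Sum>l<N. (\<alpha> j * f0 (ipr * x - u j))
            * (cnj (\<beta> l) * cnj (g0 (ipr * x - (ipr * u k + u l)))))"
      unfolding arg by (simp add: cnj_sum mult_ac sum_product)
    also have "\<dots> = (\<Sum>j<N. \<Sum>l<N. (complex_of_real (real q) * (\<alpha> j * cnj (\<beta> l))) * T j l x)"
      unfolding sq_cnj T_def sum_distrib_left by (intro sum.cong refl) (simp only: mult_ac)
    finally show ?thesis .
  qed
  have "ip M (\<lambda>x. sq * (\<Sum>j<N. \<alpha> j * f0 (ipr * x - u j)))
             (\<lambda>x. sq * (\<Sum>l<N. \<beta> l * g0 (ipr * (x - u k) - u l)))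
      = (\<Sum>j<N. \<Sum>l<N. (complex_of_real (real q) * (\<alpha> j * cnj (\<beta> l))) * (LINT x|M. T j l x))"
    unfolding ip_def expand using T_integrable by (simp add: integral_sum)
  also have "\<dots> = (\<Sum>j<N. \<Sum>l<N. \<alpha> j * cnj (\<beta> l) * ip M f0 (\<lambda>x. g0 (x - u (shift_index j l k))))"
  proof (intro sum.cong refl)
    fix j l
    have "complex_of_real (real q) * complex_of_real (1 / real q) = 1"
      using real_q_ge_2 by (simp flip: of_real_mult)
    then show "complex_of_real (real q) * (\<alpha> j * cnj (\<beta> l)) * (LINT x|M. T j l x) =
        \<alpha> j * cnj (\<beta> l) * ip M f0 (\<lambda>x. g0 (x - u (shift_index j l k)))"
      unfolding T_def integral_two_scale_term[OF f0 g0] by (simp add: mult_ac)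
  qed
  finally show ?thesis unfolding sq_def .
qed

lemma ip_two_scale_tendsto:
  fixes f0 g0 F G :: "'k \<Rightarrow> complex" and \<alpha> \<beta> :: "nat \<Rightarrow> complex"
  assumes f0: "L2 M f0" and g0: "L2 M g0" and F: "L2 M F" and G: "L2 M G"
    and F_refines: "two_scale M q pr u \<alpha> f0 F" and G_refines: "two_scale M q pr u \<beta> g0 G"
  shows "(\<lambda>N. \<Sum>j<N. \<Sum>l<N. \<alpha> j * cnj (\<beta> l) * ip M f0 (\<lambda>x. g0 (x - u (shift_index j l k))))
           \<longlonglongrightarrow> ip M F (\<lambda>x. G (x - u k))"
proof -
  define sq where "sq = complex_of_real (sqrt (real q))"
  define Fs where "Fs N x = sq * (\<Sum>j<N. \<alpha> j * f0 (ipr * x - u j))" for N x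
  define Gs where "Gs N x = sq * (\<Sum>l<N. \<beta> l * g0 (ipr * x - u l))" for N x
  have Fs: "L2 M (Fs N)" and Gs: "L2 M (Gs N)" for N
    unfolding Fs_def Gs_def by (intro L2_cmult L2_sum L2_affine f0 g0)+
  have Gs_shift: "L2 M (\<lambda>x. Gs N (x - u k))" for N
    using L2_translate[OF Gs[of N], of "- u k"] by simp
  have G_shift: "L2 M (\<lambda>x. G (x - u k))" using L2_translate[OF G, of "- u k"] by simp
  have F_lim: "(\<lambda>N. nsq M (\<lambda>x. F x - Fs N x)) \<longlonglongrightarrow> 0"
    using F_refines unfolding two_scale_def L2_lim_def Fs_def sq_def .
  have "(\<lambda>N. nsq M (\<lambda>x. G x - Gs N x)) \<longlonglongrightarrow> 0"
    using G_refines unfolding two_scale_def L2_lim_def Gs_def sq_def .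
  moreover have "nsq M (\<lambda>x. G (x - u k) - Gs N (x - u k)) = nsq M (\<lambda>x. G x - Gs N x)" for N
    using nsq_translate[OF L2_diff[OF G Gs[of N]], of "- u k"] by simp
  ultimately have G_lim: "(\<lambda>N. nsq M (\<lambda>x. G (x - u k) - Gs N (x - u k))) \<longlonglongrightarrow> 0" by simp
  have "(\<lambda>N. ip M (Fs N) (\<lambda>x. Gs N (x - u k))) \<longlonglongrightarrow> ip M F (\<lambda>x. G (x - u k))"
    by (rule ip_tendsto[OF F G_shift Fs Gs_shift F_lim G_lim])
  then show ?thesis
    unfolding Fs_def Gs_def sq_def ip_two_scale_partial_sum[OF f0 g0] .
qed

text \<open>Biorthogonality transfers along refinements with common masks: both inner products
  are limits of the same double series in the inner products of the coarser functions.\<close>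

lemma ip_translates_two_scale_eq:
  fixes f0 g0 F G f1 g1 F1 G1 :: "'k \<Rightarrow> complex" and \<alpha> \<beta> :: "nat \<Rightarrow> complex"
  assumes "L2 M f0" "L2 M g0" "L2 M F" "L2 M G"
    and "L2 M f1" "L2 M g1" "L2 M F1" "L2 M G1"
    and "two_scale M q pr u \<alpha> f0 F" "two_scale M q pr u \<beta> g0 G"
    and "two_scale M q pr u \<alpha> f1 F1" "two_scale M q pr u \<beta> g1 G1"
    and coarse: "\<And>m. ip M f0 (\<lambda>x. g0 (x - u m)) = ip M f1 (\<lambda>x. g1 (x - u m))"
  shows "ip M F (\<lambda>x. G (x - u k)) = ip M F1 (\<lambda>x. G1 (x - u k))"
proof -
  have "(\<lambda>N. \<Sum>j<N. \<Sum>l<N. \<alpha> j * cnj (\<beta> l) * ip M f1 (\<lambda>x. g1 (x - u (shift_index j l k))))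
          \<longlonglongrightarrow> ip M F (\<lambda>x. G (x - u k))"
    using ip_two_scale_tendsto[OF assms(1-4,9,10)] unfolding coarse .
  moreover have "(\<lambda>N. \<Sum>j<N. \<Sum>l<N. \<alpha> j * cnj (\<beta> l) * ip M f1 (\<lambda>x. g1 (x - u (shift_index j l k))))
          \<longlonglongrightarrow> ip M F1 (\<lambda>x. G1 (x - u k))"
    by (rule ip_two_scale_tendsto[OF assms(5-8,11,12)])
  ultimately show ?thesis by (rule LIMSEQ_unique)
qed

end

theorem theorem3p2:
  fixes absv :: "'k::{field,topological_space} \<Rightarrow> real"
    and M :: "'k measure"
    and p c q :: nat and pr :: 'k and zeta :: "nat \<Rightarrow> 'k"
    and u :: "nat \<Rightarrow> 'k" and chi :: "'k \<Rightarrow> complex"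
    and phi phit :: "'k \<Rightarrow> complex"
    and psi psit :: "nat \<Rightarrow> 'k \<Rightarrow> complex"
    and a b :: "nat \<Rightarrow> nat \<Rightarrow> complex"
    and om omt :: "nat \<Rightarrow> 'k \<Rightarrow> complex"
  assumes K: "local_field_char_p absv p c pr"
    and q: "q = p ^ c"
    and zeta: "residue_basis absv p c zeta"
    and u: "u = u_pt p c zeta pr"
    and haar: "haar_measure absv M"
    and chi: "good_character absv q chi"
    and L2_funs: "L2 M phi" "L2 M phit"
      "\<forall>l\<in>{1..<q}. L2 M (psi l)" "\<forall>l\<in>{1..<q}. L2 M (psit l)"
    and coeff_l2: "\<forall>s<q. summable (\<lambda>k. (cmod (a s k))\<^sup>2)"
      "\<forall>s<q. summable (\<lambda>k. (cmod (b s k))\<^sup>2)"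
    and refine_phi: "two_scale M q pr u (a 0) phi phi"
    and refine_phit: "two_scale M q pr u (b 0) phit phit"
    and refine_psi: "\<forall>l\<in>{1..<q}. two_scale M q pr u (a l) phi (psi l)"
    and refine_psit: "\<forall>l\<in>{1..<q}. two_scale M q pr u (b l) phit (psit l)"
    and MRA: "\<exists>V. mra M pr u phi V \<and>
                (\<exists>W. direct_complement M W (V 0) (V 1) \<and>
                     riesz_basis M (\<lambda>(l, k) x. psi l (x - u k)) ({1..<q} \<times> UNIV) W)"
    and biorth1: "\<forall>k. ip M phi (\<lambda>x. phit (x - u k)) = (if k = 0 then 1 else 0)"
    and biorth2: "\<forall>k. \<forall>l\<in>{1..<q}. ip M phi (\<lambda>x. psit l (x - u k)) = 0"
    and biorth3: "\<forall>k. \<forall>l\<in>{1..<q}. ip M phit (\<lambda>x. psi l (x - u k)) = 0"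
    and biorth4: "\<forall>k. \<forall>l\<in>{1..<q}. \<forall>l'\<in>{1..<q}.
                    ip M (psi l) (\<lambda>x. psit l' (x - u k)) = (if l = l' \<and> k = 0 then 1 else 0)"
    and om0: "om 0 = phi" and omt0: "omt 0 = phit"
    and om_L2: "\<forall>n. L2 M (om n)" and omt_L2: "\<forall>n. L2 M (omt n)"
    and om_rec: "\<forall>n. two_scale M q pr u (a (n mod q)) (om (n div q)) (om n)"
    and omt_rec: "\<forall>n. two_scale M q pr u (b (n mod q)) (omt (n div q)) (omt n)"
  shows "\<forall>n k. ip M (om n) (\<lambda>x. omt n (x - u k)) = (if k = 0 then 1 else 0)"
proof -
  interpret local_field_haar absv p c pr zeta M
    by unfold_locales (rule K zeta haar)+
  note transfer = ip_translates_two_scale_eq[folded q u]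
  have "ip M (om n) (\<lambda>x. omt n (x - u k)) = (if k = 0 then 1 else 0)" for n k
  proof (induction n arbitrary: k rule: less_induct)
    case (less n)
    show ?case
    proof (cases "n = 0")
      case True
      then show ?thesis using biorth1 om0 omt0 by simp
    next
      case False
      let ?r = "n div q" and ?s = "n mod q"
      have "?r < n" using False q_ge_2 q by simp
      then have coarse: "ip M (om ?r) (\<lambda>x. omt ?r (x - u m)) = ip M phi (\<lambda>x. phit (x - u m))" for m
        using less.IH biorth1 by simp
      have rec: "two_scale M q pr u (a ?s) (om ?r) (om n)" "two_scale M q pr u (b ?s) (omt ?r) (omt n)"
        using om_rec omt_rec by blast+
      have "?s < q" using q_ge_2 q by simp
      then consider "?s = 0" | "?s \<in> {1..<q}" by fastforce
      then show ?thesis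
      proof cases
        case 1
        have "ip M (om n) (\<lambda>x. omt n (x - u k)) = ip M phi (\<lambda>x. phit (x - u k))"
          using rec refine_phi refine_phit 1
          by (intro transfer[OF _ _ _ _ L2_funs(1,2,1,2) _ _ _ _ coarse]) (simp_all add: om_L2 omt_L2)
        then show ?thesis using biorth1 by simp
      next
        case 2
        have "ip M (om n) (\<lambda>x. omt n (x - u k)) = ip M (psi ?s) (\<lambda>x. psit ?s (x - u k))"
          using rec refine_psi refine_psit L2_funs 2
          by (intro transfer[OF _ _ _ _ L2_funs(1,2) _ _ _ _ _ _ coarse]) (auto simp: om_L2 omt_L2)
        then show ?thesis using biorth4 2 by simp
      qed
    qed
  qed
  then show ?thesis by blast
qed

end
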